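(* Let $k\ge2$ and $c\in\mathcal{S}_k^\beta\setminus\{\mathbf{0}\}$. Then every element of the ideal $\langle\gamma^{\nu(c)+1}\rangle$ appears exactly $q^{\nu(c)}L_\beta(k-1)$ times among the coordinates of $c$, and the remaining $q^{s(k-1)}$ coordinates of $c$ lie in $\langle\gamma^{\nu(c)}\rangle\setminus\langle\gamma^{\nu(c)+1}\rangle$, where $L_\beta(m)=q^{(s-1)(m-1)}\frac{q^m-1}{q-1}$.
   Context: Let $R$ be a finite commutative chain ring with maximal ideal $\langle\gamma\rangle$, nilpotency index $s$ (so $\langle\gamma^s\rangle=\{0\}$) and residue field $R/\langle\gamma\rangle\cong\mathbb{F}_q$. Fix coset representatives $T=\{e_0,\dots,e_{q-1}\}$ with $e_0=0,e_1=1$, ordered $e_0<\dots<e_{q-1}$; each $r\in R$ is uniquely $\sum_{i=0}^{s-1}r_i\gamma^i$, $r_i\in T$; order $R$ by $x>y$ iff $x_i>y_i$ in $T$ for the largest $i$ with $x_i\neq y_i$; list $R=\{\rho_0,\dots,\rho_{q^s-1}\}$ increasingly. $\mathbf{a}^{(m)}$ is the constant vector of length $m$. Define $G_1^\alpha=(\rho_0\ \cdots\ \rho_{q^s-1})$ and, for $k>1$, $G_k^\alpha$ as the matrix of $q^s$ column blocks, the $j$-th having first row $\boldsymbol{\rho_j}^{(q^{s(k-1)})}$ and $G_{k-1}^\alpha$ below. List $\langle\gamma\rangle$ increasingly as $a_0\gamma<\dots<a_{q^{s-1}-1}\gamma$. Define $G_1^\beta=(1)$ and, for $k>1$, $G_k^\beta$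 as the matrix with column blocks: first a block with first row $\mathbf{1}^{(q^{s(k-1)})}$ and $G_{k-1}^\alpha$ below; then for each $j=0,\dots,q^{s-1}-1$ a block with first row the constant vector with entry $a_j\gamma$ and $G_{k-1}^\beta$ below. $\mathcal{S}_k^\beta$ is the $R$-submodule generated by the rows of $G_k^\beta$ (its length is $L_\beta(k)$). Valuation: for $x\in R\setminus\{0\}$, $\nu(x)$ is the largest $m$ with $x=\gamma^m\beta$, $\beta$ a unit; $\nu(0)=\infty$; for $x\in R^n$, $\nu(x)=\min_i\nu(x_i)$. *)

theory Defs
  imports Main "HOL-Library.Multiset"
begin

definition is_ideal :: "'a::comm_ring_1 set \<Rightarrow> bool" where
  "is_ideal I \<longleftrightarrow> 0 \<in> I \<and> (\<forall>x\<in>I. \<forall>y\<in>I. x + y \<in> I) \<and> (\<forall>r. \<forall>x\<in>I. r * x \<in> I)"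

text \<open>Digits of r in the gamma-adic expansion r = sum_{i<s} e_{d i} gamma^i, given as
  indices d i into the list T of coset representatives e_0,...,e_{q-1}.\<close>
definition digits :: "'a::comm_ring_1 list \<Rightarrow> 'a \<Rightarrow> nat \<Rightarrow> 'a \<Rightarrow> nat \<Rightarrow> nat" where
  "digits T g s x = (THE d. (\<forall>i<s. d i < length T) \<and> (\<forall>i. s \<le> i \<longrightarrow> d i = 0)
                           \<and> x = (\<Sum>i<s. T ! (d i) * g ^ i))"

definition chain_less :: "'a::comm_ring_1 list \<Rightarrow> 'a \<Rightarrow> nat \<Rightarrow> 'a \<Rightarrow> 'a \<Rightarrow> bool" where
  "chain_less T g s x y \<longleftrightarrow>
     (\<exists>i<s. digits T g s x i < digits T g s y i \<and>
            (\<forall>j. i < j \<and> j < s \<longrightarrow> digits T g s x j = digits T g s y j))"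

definition rho_list :: "'a::comm_ring_1 list \<Rightarrow> 'a \<Rightarrow> nat \<Rightarrow> 'a list" where
  "rho_list T g s = (THE xs. set xs = UNIV \<and> sorted_wrt (chain_less T g s) xs)"

definition ideal_list :: "'a::comm_ring_1 list \<Rightarrow> 'a \<Rightarrow> nat \<Rightarrow> 'a list" where
  "ideal_list T g s = filter (\<lambda>x. g dvd x) (rho_list T g s)"

text \<open>Matrices are represented as lists of columns; each column is a list (top row first).\<close>
primrec Galpha :: "'a::comm_ring_1 list \<Rightarrow> 'a \<Rightarrow> nat \<Rightarrow> nat \<Rightarrow> 'a list list" where
  "Galpha T g s 0 = [[]]"
| "Galpha T g s (Suc k) =
     concat (map (\<lambda>r. map (\<lambda>col. r # col) (Galpha T g s k)) (rho_list T g s))"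

fun Gbeta :: "'a::comm_ring_1 list \<Rightarrow> 'a \<Rightarrow> nat \<Rightarrow> nat \<Rightarrow> 'a list list" where
  "Gbeta T g s 0 = []"
| "Gbeta T g s (Suc 0) = [[1]]"
| "Gbeta T g s (Suc (Suc k)) =
     map (\<lambda>col. 1 # col) (Galpha T g s (Suc k))
     @ concat (map (\<lambda>a. map (\<lambda>col. a # col) (Gbeta T g s (Suc k))) (ideal_list T g s))"

definition code_beta :: "'a::comm_ring_1 list \<Rightarrow> 'a \<Rightarrow> nat \<Rightarrow> nat \<Rightarrow> 'a list set" where
  "code_beta T g s k = {map (\<lambda>col. \<Sum>i<k. u i * col ! i) (Gbeta T g s k) | u. True}"

definition nu_el :: "'a::comm_ring_1 \<Rightarrow> 'a \<Rightarrow> nat" where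
  "nu_el g x = (GREATEST m. \<exists>b. b dvd 1 \<and> x = g ^ m * b)"

definition nu_vec :: "'a::comm_ring_1 \<Rightarrow> 'a list \<Rightarrow> nat" where
  "nu_vec g c = Min (nu_el g ` (set c - {0}))"

definition L_beta :: "nat \<Rightarrow> nat \<Rightarrow> nat \<Rightarrow> nat" where
  "L_beta q s m = q ^ ((s - 1) * (m - 1)) * ((q ^ m - 1) div (q - 1))"

end

theory Submission
  imports Defs
begin

(*
  Write c = u G_k^\<beta> and let t be the least valuation of the coefficients u_i, so every
  coordinate of c lies in <\<gamma>^t>. The columns of G_k^\<beta> are (1, v) for all v in R^(k-1), and
  (a, w) for a in <\<gamma>> and w a column of G_(k-1)^\<beta>. A linear form whose coefficients have
  least valuation t takes every value of <\<gamma>^t> equally often, since its fibres are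
  translates of its kernel. Induction on k: if some u_i with i >= 1 has valuation t, the
  first block hits each y in <\<gamma>^(t+1)> exactly q^(s(k-2)+t) times and the induction
  hypothesis handles the second block; otherwise only u_0 has valuation t, the first block
  misses <\<gamma>^(t+1)>, and each coordinate b of the second block is completed to y by
  exactly q^t elements a. Either way y occurs q^t L(k-1) times, and as
  L(k) = q^(s(k-1)) + q^(s-1) L(k-1) and |<\<gamma>^(t+1)>| = q^(s-t-1), exactly q^(s(k-1))
  coordinates lie outside <\<gamma>^(t+1)>; in particular \<nu>(c) = t.
*)

lemma sum_digits_less_power:
  fixes b :: nat
  assumes "\<forall>j<n. d j < b"
  shows "(\<Sum>j<n. d j * b ^ j) < b ^ n"
  using assms
proof (induction n)
  case (Suc n)
  then have "d n < b" by simp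
  then have "Suc (d n) * b ^ n \<le> b * b ^ n"
    by (intro mult_le_mono1) simp
  with Suc show ?case by simp
qed simp

lemma sum_digits_less_lex:
  fixes b :: nat
  assumes "\<forall>j<n. d j < b" "\<forall>j<n. e j < b" "i < n" "d i < e i"
    and "\<forall>j. i < j \<and> j < n \<longrightarrow> d j = e j"
  shows "(\<Sum>j<n. d j * b ^ j) < (\<Sum>j<n. e j * b ^ j)"
  using assms
proof (induction n)
  case (Suc n)
  show ?case
  proof (cases "i = n")
    case True
    have "(\<Sum>j<n. d j * b ^ j) < b ^ n"
      using Suc.prems by (intro sum_digits_less_power) simp
    moreover have "Suc (d n) * b ^ n \<le> e n * b ^ n"
      using Suc.prems True by (intro mult_le_mono1) simp
    ultimately show ?thesis by simp
  next
    case False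
    with Suc show ?thesis by simp
  qed
qed simp

lemma ex1_sorted_wrt_inv_image_UNIV:
  fixes f :: "'a::finite \<Rightarrow> nat"
  assumes "inj f"
  shows "\<exists>!xs. set xs = UNIV \<and> sorted_wrt (\<lambda>x y. f x < f y) xs"
proof -
  obtain ks where ks: "sorted_wrt (<) ks" "set ks = range f"
    using ex1_sorted_list_for_set_if_finite[of "range f"] by auto
  show ?thesis
  proof (rule ex1I[of _ "map (inv f) ks"])
    show "set (map (inv f) ks) = UNIV \<and> sorted_wrt (\<lambda>x y. f x < f y) (map (inv f) ks)"
      using ks assms
      by (auto simp: image_image sorted_wrt_map f_inv_into_f elim: sorted_wrt_mono_rel[rotated])
  next
    fix xs assume xs: "set xs = UNIV \<and> sorted_wrt (\<lambda>x y. f x < f y) xs"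
    then have "map f xs = ks"
      using ks by (intro strict_sorted_equal) (auto simp: sorted_wrt_map)
    then show "xs = map (inv f) ks"
      using assms by (auto simp: map_idI)
  qed
qed

lemma distinct_concat_map:
  "distinct xs \<Longrightarrow> (\<forall>x\<in>set xs. distinct (f x)) \<Longrightarrow>
   (\<forall>x\<in>set xs. \<forall>y\<in>set xs. x \<noteq> y \<longrightarrow> set (f x) \<inter> set (f y) = {}) \<Longrightarrow>
   distinct (concat (map f xs))"
  by (induction xs) auto

lemma count_mset_map_distinct:
  assumes "distinct xs"
  shows "count (mset (map f xs)) y = card {x \<in> set xs. f x = y}"
proof -
  have "count (mset (map f xs)) y = length (filter (\<lambda>x. f x = y) xs)"
    by (induction xs) auto
  with assms show ?thesis
    by (simp add: distinct_length_filter Collect_conj_eq Int_commute)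
qed

lemma count_mset_concat_map:
  assumes "distinct xs"
  shows "count (mset (concat (map f xs))) y = (\<Sum>x\<in>set xs. count (mset (f x)) y)"
proof -
  have "count (mset (concat (map f xs))) y = (\<Sum>x\<leftarrow>xs. count (mset (f x)) y)"
    by (induction xs) auto
  with assms show ?thesis
    by (simp add: sum_list_distinct_conv_sum_set)
qed

lemma count_mset_map_add_left:
  fixes c :: "'b::ab_group_add"
  shows "count (mset (map (\<lambda>x. c + f x) xs)) y = count (mset (map f xs)) (y - c)"
  by (induction xs) (auto simp: algebra_simps)

lemma card_eq_sum_card_fibres:
  assumes "finite A"
  shows "card A = (\<Sum>y\<in>f ` A. card {x \<in> A. f x = y})"
  using sum.image_gen[OF assms, of "\<lambda>_. 1 :: nat" f] by (simp only: card_eq_sum)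

lemma length_filter_mem_eq_sum_count:
  assumes "finite S"
  shows "length (filter (\<lambda>x. x \<in> S) xs) = (\<Sum>y\<in>S. count (mset xs) y)"
proof (induction xs)
  case (Cons a xs)
  have "(\<Sum>y\<in>S. count (mset (a # xs)) y) = (\<Sum>y\<in>S. count (mset xs) y) + (\<Sum>y\<in>S. if y = a then 1 else 0)"
    by (subst sum.distrib[symmetric]) (auto intro!: sum.cong)
  with Cons assms show ?case by (simp add: sum.delta)
qed simp

lemma sum_count_mset_eq_sum_list_card:
  assumes "finite A"
  shows "(\<Sum>a\<in>A. count (mset xs) (h a)) = (\<Sum>b\<leftarrow>xs. card {a \<in> A. h a = b})"
proof (induction xs)
  case (Cons b xs)
  have "(\<Sum>a\<in>A. count (mset (b # xs)) (h a))
      = (\<Sum>a\<in>A. count (mset xs) (h a)) + (\<Sum>a\<in>A. if h a = b then 1 else 0)"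
    by (subst sum.distrib[symmetric]) (auto intro!: sum.cong)
  with Cons assms show ?case by (simp add: sum.inter_filter[symmetric])
qed simp

lemma L_beta_eq_sum:
  assumes "2 \<le> q"
  shows "L_beta q s m = q ^ ((s - 1) * (m - 1)) * (\<Sum>i<m. q ^ i)"
proof -
  obtain p where q: "q = Suc p" and p: "0 < p"
    using assms by (cases q) auto
  have "p * (\<Sum>i<m. Suc p ^ i) = Suc p ^ m - 1"
  proof (induction m)
    case (Suc m)
    have "1 \<le> Suc p ^ m" by simp
    with Suc show ?case by (simp add: algebra_simps)
  qed simp
  then have "(q ^ m - 1) div (q - 1) = (\<Sum>i<m. q ^ i)"
    using p unfolding q by (metis diff_Suc_1 nonzero_mult_div_cancel_left less_irrefl)
  then show ?thesis
    unfolding L_beta_def by simp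
qed

lemma L_beta_0 [simp]: "L_beta q s 0 = 0"
  by (simp add: L_beta_def)

lemma L_beta_Suc:
  assumes "2 \<le> q" "1 \<le> s"
  shows "L_beta q s (Suc n) = q ^ (s * n) + q ^ (s - 1) * L_beta q s n"
proof (cases n)
  case (Suc n')
  have s_split: "(s - 1) * Suc n' + Suc n' = s * Suc n'"
    using assms(2) by (cases s) auto
  have exp_split: "(s - 1) * Suc n' = (s - 1) + (s - 1) * n'" by simp
  have "L_beta q s (Suc n) = q ^ ((s - 1) * Suc n') * (q ^ Suc n' + (\<Sum>i<Suc n'. q ^ i))"
    using assms Suc by (simp add: L_beta_eq_sum)
  also have "\<dots> = q ^ ((s - 1) * Suc n' + Suc n')
      + q ^ (s - 1) * (q ^ ((s - 1) * n') * (\<Sum>i<Suc n'. q ^ i))"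
    unfolding exp_split by (simp add: algebra_simps power_add)
  also have "\<dots> = q ^ (s * n) + q ^ (s - 1) * L_beta q s n"
    using assms Suc s_split by (simp add: L_beta_eq_sum)
  finally show ?thesis .
qed (use assms in \<open>simp add: L_beta_eq_sum\<close>)

definition lin_comb :: "nat \<Rightarrow> (nat \<Rightarrow> 'a::comm_ring_1) \<Rightarrow> 'a list \<Rightarrow> 'a" where
  "lin_comb m u xs = (\<Sum>i<m. u i * xs ! i)"

lemma code_beta_eq: "code_beta T \<gamma> s k = range (\<lambda>u. map (lin_comb k u) (Gbeta T \<gamma> s k))"
  by (auto simp: code_beta_def lin_comb_def)

lemma lin_comb_Cons: "lin_comb (Suc m) u (x # xs) = u 0 * x + lin_comb m (\<lambda>i. u (Suc i)) xs"
  unfolding lin_comb_def by (subst sum.lessThan_Suc_shift) simp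

lemma dvd_lin_comb: "\<forall>i<m. d dvd u i \<Longrightarrow> d dvd lin_comb m u xs"
  by (auto simp: lin_comb_def intro!: dvd_sum dvd_mult2)

lemma lin_comb_map2_add:
  "length xs = m \<Longrightarrow> length ys = m \<Longrightarrow>
   lin_comb m u (map2 (+) xs ys) = lin_comb m u xs + lin_comb m u ys"
  by (simp add: lin_comb_def distrib_left sum.distrib)

lemma lin_comb_map2_diff:
  "length xs = m \<Longrightarrow> length ys = m \<Longrightarrow>
   lin_comb m u (map2 (-) xs ys) = lin_comb m u xs - lin_comb m u ys"
  by (simp add: lin_comb_def right_diff_distrib sum_subtractf)

lemma card_lin_comb_fibre_translate:
  assumes "length x\<^sub>0 = m"
  shows "card {xs. length xs = m \<and> lin_comb m u xs = z + lin_comb m u x\<^sub>0}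
       = card {xs. length xs = m \<and> lin_comb m u xs = z}"
proof (rule sym, rule bij_betw_same_card[of "\<lambda>xs. map2 (+) xs x\<^sub>0"],
       rule bij_betw_byWitness[where f' = "\<lambda>xs. map2 (-) xs x\<^sub>0"])
  show "\<forall>xs\<in>{xs. length xs = m \<and> lin_comb m u xs = z}. map2 (-) (map2 (+) xs x\<^sub>0) x\<^sub>0 = xs"
    using assms by (auto intro!: nth_equalityI)
  show "\<forall>xs\<in>{xs. length xs = m \<and> lin_comb m u xs = z + lin_comb m u x\<^sub>0}. map2 (+) (map2 (-) xs x\<^sub>0) x\<^sub>0 = xs"
    using assms by (auto intro!: nth_equalityI)
  show "(\<lambda>xs. map2 (+) xs x\<^sub>0) ` {xs. length xs = m \<and> lin_comb m u xs = z}
      \<subseteq> {xs. length xs = m \<and> lin_comb m u xs = z + lin_comb m u x\<^sub>0}"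
    using assms by (auto simp: lin_comb_map2_add)
  show "(\<lambda>xs. map2 (-) xs x\<^sub>0) ` {xs. length xs = m \<and> lin_comb m u xs = z + lin_comb m u x\<^sub>0}
      \<subseteq> {xs. length xs = m \<and> lin_comb m u xs = z}"
    using assms by (auto simp: lin_comb_map2_diff)
qed

section \<open>Valuation and cardinalities in a finite chain ring\<close>

locale finite_chain_ring =
  fixes \<gamma> :: "'a::{comm_ring_1,finite}" and T :: "'a list" and s :: nat
  assumes maximal_ideal: "{x. \<gamma> dvd x} = {x. \<not> x dvd 1}"
    and s_pos: "1 \<le> s" and gamma_nilpotent: "\<gamma> ^ s = 0" and gamma_power_nonzero: "\<gamma> ^ (s - 1) \<noteq> 0"
    and length_T: "2 \<le> length T"
    and residue_reps: "\<forall>x. \<exists>!i. i < length T \<and> \<gamma> dvd (x - T ! i)"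
begin

abbreviation q :: nat where "q \<equiv> length T"

lemma unit_iff_not_gamma_dvd: "x dvd 1 \<longleftrightarrow> \<not> \<gamma> dvd x"
  using maximal_ideal by (auto simp: set_eq_iff)

lemma gamma_power_eq_0: "s \<le> m \<Longrightarrow> \<gamma> ^ m = 0"
  by (metis le_add_diff_inverse mult_zero_left gamma_nilpotent power_add)

lemma gamma_dvd_of_power_dvd_mult:
  assumes "j < s" and "\<gamma> ^ Suc j dvd \<gamma> ^ j * x"
  shows "\<gamma> dvd x"
proof (rule ccontr)
  assume x: "\<not> \<gamma> dvd x"
  obtain z where z: "\<gamma> ^ j * x = \<gamma> ^ Suc j * z"
    using assms(2) by (auto elim: dvdE)
  have "\<not> \<gamma> dvd x - \<gamma> * z"
    using x by (metis diff_add_cancel dvd_add dvd_triv_left)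
  then have "x - \<gamma> * z dvd 1"
    using unit_iff_not_gamma_dvd by blast
  then obtain w where w: "1 = (x - \<gamma> * z) * w"
    by (rule dvdE)
  have "\<gamma> ^ j * (x - \<gamma> * z) = \<gamma> ^ j * x - \<gamma> ^ Suc j * z"
    by (simp add: algebra_simps)
  then have "\<gamma> ^ j * (x - \<gamma> * z) = 0"
    using z by simp
  then have "\<gamma> ^ j = 0"
    using w by (metis mult.assoc mult.right_neutral mult_zero_left)
  moreover have "\<gamma> ^ (s - 1) = \<gamma> ^ j * \<gamma> ^ (s - 1 - j)"
    using assms(1) by (simp flip: power_add)
  ultimately show False
    using gamma_power_nonzero by simp
qed

lemma exact_power_dvdE:
  assumes "\<gamma> ^ t dvd x" and "\<not> \<gamma> ^ Suc t dvd x"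
  obtains v where "v dvd 1" and "x = \<gamma> ^ t * v"
proof -
  obtain v where v: "x = \<gamma> ^ t * v"
    using assms(1) by (auto elim: dvdE)
  have "\<not> \<gamma> dvd v"
  proof
    assume "\<gamma> dvd v"
    then have "\<gamma> ^ t * \<gamma> dvd x"
      using v by (simp add: mult_dvd_mono)
    with assms(2) show False
      by (metis power_Suc2)
  qed
  with v unit_iff_not_gamma_dvd that show ?thesis by blast
qed

lemma exact_power_less:
  assumes "\<gamma> ^ t dvd x" and "\<not> \<gamma> ^ Suc t dvd x"
  shows "t < s"
  using assms gamma_power_eq_0[of t] by (cases "t < s") auto

lemma power_dvd_iff_le:
  assumes "\<gamma> ^ m dvd x" and "\<not> \<gamma> ^ Suc m dvd x"
  shows "\<gamma> ^ j dvd x \<longleftrightarrow> j \<le> m"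
proof
  assume j: "\<gamma> ^ j dvd x"
  show "j \<le> m"
  proof (rule ccontr)
    assume "\<not> j \<le> m"
    then have "\<gamma> ^ Suc m dvd \<gamma> ^ j"
      by (intro le_imp_power_dvd) simp
    with j assms(2) show False
      by (blast intro: dvd_trans)
  qed
next
  assume "j \<le> m"
  with assms(1) show "\<gamma> ^ j dvd x"
    by (blast intro: dvd_trans le_imp_power_dvd)
qed

lemma exists_exact_power:
  assumes "\<exists>x\<in>X. x \<noteq> 0"
  shows "\<exists>t. (\<forall>x\<in>X. \<gamma> ^ t dvd x) \<and> (\<exists>x\<in>X. \<not> \<gamma> ^ Suc t dvd x)"
proof -
  have "\<exists>m. \<exists>x\<in>X. \<not> \<gamma> ^ m dvd x"
    using assms gamma_nilpotent by (metis dvd_0_left_iff)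
  then obtain m where m: "\<exists>x\<in>X. \<not> \<gamma> ^ m dvd x" and least: "\<And>m'. m' < m \<Longrightarrow> \<forall>x\<in>X. \<gamma> ^ m' dvd x"
    using exists_least_iff[of "\<lambda>m. \<exists>x\<in>X. \<not> \<gamma> ^ m dvd x"] by blast
  then obtain t where "m = Suc t"
    by (cases m) auto
  with m least show ?thesis by auto
qed

lemma nu_el_eq:
  assumes "\<gamma> ^ m dvd x" and "\<not> \<gamma> ^ Suc m dvd x"
  shows "nu_el \<gamma> x = m"
  unfolding nu_el_def
proof (rule Greatest_equality)
  obtain v where "v dvd 1" "x = \<gamma> ^ m * v"
    using assms by (rule exact_power_dvdE)
  then show "\<exists>b. b dvd 1 \<and> x = \<gamma> ^ m * b"
    by auto
next
  fix j assume "\<exists>b. b dvd 1 \<and> x = \<gamma> ^ j * b"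
  then have "\<gamma> ^ j dvd x"
    by auto
  then show "j \<le> m"
    using power_dvd_iff_le[OF assms] by simp
qed

lemma nu_vec_eq:
  assumes "\<forall>x\<in>set c. \<gamma> ^ t dvd x" and "x\<^sub>0 \<in> set c" and "\<not> \<gamma> ^ Suc t dvd x\<^sub>0"
  shows "nu_vec \<gamma> c = t"
  unfolding nu_vec_def
proof (rule Min_eqI)
  fix m assume "m \<in> nu_el \<gamma> ` (set c - {0})"
  then obtain x where x: "x \<in> set c" "x \<noteq> 0" "m = nu_el \<gamma> x"
    by auto
  then obtain m' where "\<gamma> ^ m' dvd x" "\<not> \<gamma> ^ Suc m' dvd x"
    using exists_exact_power[of "{x}"] by auto
  with x assms(1) show "t \<le> m"
    using nu_el_eq power_dvd_iff_le by blast
next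
  have "x\<^sub>0 \<noteq> 0" "nu_el \<gamma> x\<^sub>0 = t"
    using assms nu_el_eq by auto
  with assms(2) show "t \<in> nu_el \<gamma> ` (set c - {0})"
    by force
qed simp

lemma residue_rep_eqI:
  assumes "i < q" and "j < q" and "\<gamma> dvd T ! i - T ! j"
  shows "i = j"
proof -
  have "\<exists>!l. l < q \<and> \<gamma> dvd T ! i - T ! l"
    using residue_reps by blast
  moreover have "\<gamma> dvd T ! i - T ! i"
    by simp
  ultimately show ?thesis
    using assms by blast
qed

lemma multiples_gamma_power_eq_UN:
  "{x. \<gamma> ^ j dvd x} = (\<Union>i<q. (\<lambda>z. \<gamma> ^ j * T ! i + z) ` {x. \<gamma> ^ Suc j dvd x})"
proof (intro set_eqI iffI)
  fix x assume "x \<in> {x. \<gamma> ^ j dvd x}"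
  then obtain z where z: "x = \<gamma> ^ j * z"
    by (auto elim: dvdE)
  obtain i where i: "i < q" "\<gamma> dvd z - T ! i"
    using residue_reps by blast
  then obtain w where "z - T ! i = \<gamma> * w"
    by (auto elim: dvdE)
  then have "x = \<gamma> ^ j * T ! i + \<gamma> ^ Suc j * w"
    using z by (simp add: algebra_simps)
  with i(1) show "x \<in> (\<Union>i<q. (\<lambda>z. \<gamma> ^ j * T ! i + z) ` {x. \<gamma> ^ Suc j dvd x})"
    by (intro UN_I[of i]) auto
next
  fix x assume "x \<in> (\<Union>i<q. (\<lambda>z. \<gamma> ^ j * T ! i + z) ` {x. \<gamma> ^ Suc j dvd x})"
  then obtain i z where "x = \<gamma> ^ j * T ! i + z" "\<gamma> ^ Suc j dvd z"
    by blast
  moreover have "\<gamma> ^ j dvd \<gamma> ^ Suc j"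
    by (simp add: le_imp_power_dvd)
  ultimately show "x \<in> {x. \<gamma> ^ j dvd x}"
    by (blast intro: dvd_add dvd_trans dvd_triv_left)
qed

lemma card_multiples_gamma_power_Suc:
  assumes "j < s"
  shows "card {x. \<gamma> ^ j dvd x} = q * card {x. \<gamma> ^ Suc j dvd x}"
proof -
  let ?I = "{x. \<gamma> ^ Suc j dvd x}"
  let ?A = "\<lambda>i. (\<lambda>z. \<gamma> ^ j * T ! i + z) ` ?I"
  have disjoint: "?A i \<inter> ?A i' = {}" if "i < q" "i' < q" "i \<noteq> i'" for i i'
  proof (rule ccontr)
    assume "?A i \<inter> ?A i' \<noteq> {}"
    then obtain a b where ab: "\<gamma> ^ j * T ! i + a = \<gamma> ^ j * T ! i' + b"
      and "\<gamma> ^ Suc j dvd a" "\<gamma> ^ Suc j dvd b"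
      by blast
    have "\<gamma> ^ j * (T ! i - T ! i') = b - a"
      using ab by (simp add: algebra_simps)
    moreover have "\<gamma> ^ Suc j dvd b - a"
      using \<open>\<gamma> ^ Suc j dvd a\<close> \<open>\<gamma> ^ Suc j dvd b\<close> by (rule dvd_diff[rotated])
    ultimately have "\<gamma> ^ Suc j dvd \<gamma> ^ j * (T ! i - T ! i')"
      by simp
    then have "\<gamma> dvd T ! i - T ! i'"
      by (rule gamma_dvd_of_power_dvd_mult[OF assms])
    with that show False
      using residue_rep_eqI by blast
  qed
  have "card {x. \<gamma> ^ j dvd x} = (\<Sum>i<q. card (?A i))"
    unfolding multiples_gamma_power_eq_UN[of j] using disjoint by (intro card_UN_disjoint) auto
  also have "\<dots> = q * card ?I"
    by (simp add: card_image inj_on_def)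
  finally show ?thesis .
qed

lemma card_multiples_gamma_power:
  assumes "j \<le> s"
  shows "card {x. \<gamma> ^ j dvd x} = q ^ (s - j)"
proof -
  have card_d: "card {x. \<gamma> ^ (s - d) dvd x} = q ^ d" if "d \<le> s" for d
    using that
  proof (induction d)
    case 0
    have "{x. \<gamma> ^ s dvd x} = {0}"
      using gamma_nilpotent by auto
    then show ?case by simp
  next
    case (Suc d)
    then have "s - Suc d < s" "Suc (s - Suc d) = s - d"
      by auto
    with Suc show ?case
      using card_multiples_gamma_power_Suc[of "s - Suc d"] by simp
  qed
  with assms show ?thesis
    using card_d[of "s - j"] by simp
qed

lemma card_UNIV_eq: "card (UNIV :: 'a set) = q ^ s"
  using card_multiples_gamma_power[of 0] by simp

section \<open>The ordering of the ring and the generator matrices\<close>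

lemma gamma_adic_expansion_exists:
  "\<exists>d y. (\<forall>i<n. d i < q) \<and> (\<forall>i\<ge>n. d i = 0) \<and> x = (\<Sum>i<n. T ! d i * \<gamma> ^ i) + \<gamma> ^ n * y"
proof (induction n)
  case 0
  show ?case
    by (intro exI[of _ "\<lambda>_. 0"] exI[of _ x]) simp
next
  case (Suc n)
  then obtain d y where d: "\<forall>i<n. d i < q" "\<forall>i\<ge>n. d i = 0"
    and x: "x = (\<Sum>i<n. T ! d i * \<gamma> ^ i) + \<gamma> ^ n * y"
    by blast
  obtain j y' where "j < q" and y': "y = T ! j + \<gamma> * y'"
    using residue_reps by (metis dvdE diff_add_cancel add.commute)
  have "(\<Sum>i<n. T ! (d(n := j)) i * \<gamma> ^ i) = (\<Sum>i<n. T ! d i * \<gamma> ^ i)"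
    by (intro sum.cong) auto
  then have "x = (\<Sum>i<Suc n. T ! (d(n := j)) i * \<gamma> ^ i) + \<gamma> ^ Suc n * y'"
    using x y' by (simp add: algebra_simps)
  moreover have "\<forall>i<Suc n. (d(n := j)) i < q" "\<forall>i\<ge>Suc n. (d(n := j)) i = 0"
    using d \<open>j < q\<close> by (auto simp: less_Suc_eq)
  ultimately show ?case
    by blast
qed

lemma gamma_adic_expansion_unique:
  assumes "n \<le> s" and "\<forall>i<n. d i < q" and "\<forall>i<n. e i < q"
    and "\<gamma> ^ n dvd (\<Sum>i<n. T ! d i * \<gamma> ^ i) - (\<Sum>i<n. T ! e i * \<gamma> ^ i)"
  shows "\<forall>i<n. d i = e i"
  using assms
proof (induction n)
  case (Suc n)
  let ?D = "(\<Sum>i<n. T ! d i * \<gamma> ^ i) - (\<Sum>i<n. T ! e i * \<gamma> ^ i)"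
  have split: "(\<Sum>i<Suc n. T ! d i * \<gamma> ^ i) - (\<Sum>i<Suc n. T ! e i * \<gamma> ^ i)
      = ?D + \<gamma> ^ n * (T ! d n - T ! e n)"
    by (simp add: algebra_simps)
  have "\<gamma> ^ n dvd \<gamma> ^ Suc n"
    by (simp add: le_imp_power_dvd)
  then have "\<gamma> ^ n dvd ?D + \<gamma> ^ n * (T ! d n - T ! e n)"
    using Suc.prems(4) split by (metis dvd_trans)
  then have "\<gamma> ^ n dvd ?D"
    by (simp add: dvd_add_left_iff)
  with Suc have lower: "\<forall>i<n. d i = e i"
    by simp
  then have "?D = 0"
    by simp
  then have "\<gamma> ^ Suc n dvd \<gamma> ^ n * (T ! d n - T ! e n)"
    using Suc.prems(4) split by simp
  then have "\<gamma> dvd T ! d n - T ! e n"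
    using Suc.prems(1) by (intro gamma_dvd_of_power_dvd_mult) simp_all
  then have "d n = e n"
    using Suc.prems residue_rep_eqI by simp
  with lower show ?case
    by (auto simp: less_Suc_eq)
qed simp

lemma ex1_gamma_adic_digits:
  "\<exists>!d. (\<forall>i<s. d i < q) \<and> (\<forall>i\<ge>s. d i = 0) \<and> x = (\<Sum>i<s. T ! d i * \<gamma> ^ i)"
proof -
  obtain d y where d: "\<forall>i<s. d i < q" "\<forall>i\<ge>s. d i = 0"
    and "x = (\<Sum>i<s. T ! d i * \<gamma> ^ i) + \<gamma> ^ s * y"
    using gamma_adic_expansion_exists by blast
  then have x: "x = (\<Sum>i<s. T ! d i * \<gamma> ^ i)"
    using gamma_nilpotent by simp
  show ?thesis
  proof (rule ex1I[of _ d])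
    fix e assume e: "(\<forall>i<s. e i < q) \<and> (\<forall>i\<ge>s. e i = 0) \<and> x = (\<Sum>i<s. T ! e i * \<gamma> ^ i)"
    then have "\<forall>i<s. e i = d i"
      using d x by (intro gamma_adic_expansion_unique) auto
    with e d show "e = d"
      by (metis not_le ext)
  qed (use d x in blast)
qed

lemma digits_less: "i < s \<Longrightarrow> digits T \<gamma> s x i < q"
  and sum_digits: "x = (\<Sum>i<s. T ! digits T \<gamma> s x i * \<gamma> ^ i)"
  using theI'[OF ex1_gamma_adic_digits[of x]] unfolding digits_def by blast+

definition rank :: "'a \<Rightarrow> nat" where
  "rank x = (\<Sum>i<s. digits T \<gamma> s x i * q ^ i)"

lemma chain_less_imp_rank_less: "chain_less T \<gamma> s x y \<Longrightarrow> rank x < rank y"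
  unfolding chain_less_def rank_def by (auto intro!: sum_digits_less_lex simp: digits_less)

lemma chain_less_total:
  assumes "x \<noteq> y"
  shows "chain_less T \<gamma> s x y \<or> chain_less T \<gamma> s y x"
proof -
  define D where "D = {i. i < s \<and> digits T \<gamma> s x i \<noteq> digits T \<gamma> s y i}"
  have "D \<noteq> {}"
  proof
    assume "D = {}"
    then have "(\<Sum>i<s. T ! digits T \<gamma> s x i * \<gamma> ^ i) = (\<Sum>i<s. T ! digits T \<gamma> s y i * \<gamma> ^ i)"
      unfolding D_def by (intro sum.cong) auto
    with assms show False
      using sum_digits[of x] sum_digits[of y] by simp
  qed
  moreover have fin: "finite D"
    unfolding D_def by simp
  ultimately have "Max D \<in> D"
    by (rule Max_in[rotated])
  then have top: "Max D < s" "digits T \<gamma> s x (Max D) \<noteq> digits T \<gamma> s y (Max D)"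
    unfolding D_def by auto
  have above: "\<forall>j. Max D < j \<and> j < s \<longrightarrow> digits T \<gamma> s x j = digits T \<gamma> s y j"
  proof (intro allI impI; rule ccontr)
    fix j assume j: "Max D < j \<and> j < s" and "digits T \<gamma> s x j \<noteq> digits T \<gamma> s y j"
    then have "j \<in> D"
      unfolding D_def by simp
    with j fin show False
      using Max_ge not_le by blast
  qed
  show ?thesis
    unfolding chain_less_def using top above by (metis linorder_neqE_nat)
qed

lemma chain_less_eq_rank_less: "chain_less T \<gamma> s x y \<longleftrightarrow> rank x < rank y"
  using chain_less_total chain_less_imp_rank_less by (metis less_asym less_irrefl)

lemma inj_rank: "inj rank"
  using chain_less_total chain_less_imp_rank_less by (metis injI less_irrefl)

lemma set_rho_list: "set (rho_list T \<gamma> s) = UNIV"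
  and distinct_rho_list: "distinct (rho_list T \<gamma> s)"
proof -
  have "set (rho_list T \<gamma> s) = UNIV \<and> sorted_wrt (\<lambda>x y. rank x < rank y) (rho_list T \<gamma> s)"
    unfolding rho_list_def chain_less_eq_rank_less
    by (rule theI'[OF ex1_sorted_wrt_inv_image_UNIV[OF inj_rank]])
  then show "set (rho_list T \<gamma> s) = UNIV" "distinct (rho_list T \<gamma> s)"
    using inj_rank by (auto simp: strict_sorted_iff distinct_map simp flip: sorted_wrt_map)
qed

lemma set_ideal_list: "set (ideal_list T \<gamma> s) = {x. \<gamma> dvd x}"
  and distinct_ideal_list: "distinct (ideal_list T \<gamma> s)"
  by (simp_all add: ideal_list_def set_rho_list distinct_rho_list)

lemma length_ideal_list: "length (ideal_list T \<gamma> s) = q ^ (s - 1)"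
  using distinct_card[OF distinct_ideal_list] card_multiples_gamma_power[of 1] s_pos
  by (simp add: set_ideal_list)

lemma set_Galpha: "set (Galpha T \<gamma> s m) = {xs. length xs = m}"
  by (induction m) (auto simp: set_rho_list length_Suc_conv)

lemma distinct_Galpha: "distinct (Galpha T \<gamma> s m)"
proof (induction m)
  case (Suc m)
  then show ?case
    by (auto simp: distinct_rho_list distinct_map intro!: distinct_concat_map)
qed simp

lemma length_Galpha: "length (Galpha T \<gamma> s m) = q ^ (s * m)"
proof -
  have "length (Galpha T \<gamma> s m) = card {xs :: 'a list. length xs = m}"
    using distinct_card[OF distinct_Galpha] by (simp add: set_Galpha)
  also have "\<dots> = q ^ (s * m)"
    using card_lists_length_eq[of "UNIV :: 'a set" m] by (simp add: card_UNIV_eq power_mult)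
  finally show ?thesis .
qed

lemma length_Gbeta: "length (Gbeta T \<gamma> s (Suc n)) = L_beta q s (Suc n)"
proof (induction n)
  case 0
  then show ?case
    using length_T by (simp add: L_beta_def)
next
  case (Suc n)
  then show ?case
    using L_beta_Suc[of q s "Suc n"] length_T s_pos
    by (simp del: Galpha.simps add: length_concat o_def sum_list_triv length_Galpha length_ideal_list)
qed

section \<open>Distribution of the coordinates of a codeword\<close>

lemma lin_comb_image:
  assumes "\<forall>i<m. \<gamma> ^ t dvd u i" and "j < m" and "\<not> \<gamma> ^ Suc t dvd u j"
  shows "lin_comb m u ` {xs. length xs = m} = {y. \<gamma> ^ t dvd y}"
proof (intro subset_antisym subsetI)
  fix y assume "y \<in> {y. \<gamma> ^ t dvd y}"
  then obtain z where z: "y = \<gamma> ^ t * z"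
    by (auto elim: dvdE)
  obtain v where "v dvd 1" and v: "u j = \<gamma> ^ t * v"
    using assms by (blast elim: exact_power_dvdE)
  then obtain v' where v': "v * v' = 1"
    by (metis dvdE)
  define x\<^sub>0 where "x\<^sub>0 = (replicate m 0)[j := z * v']"
  have "lin_comb m u x\<^sub>0 = (\<Sum>i<m. if i = j then u j * (z * v') else 0)"
    unfolding lin_comb_def x\<^sub>0_def by (intro sum.cong) (auto simp: nth_list_update)
  also have "\<dots> = \<gamma> ^ t * z * (v * v')"
    using assms(2) v by (simp add: ac_simps)
  also have "\<dots> = y"
    using v' z by simp
  finally have "y = lin_comb m u x\<^sub>0" ..
  then show "y \<in> lin_comb m u ` {xs. length xs = m}"
    by (rule image_eqI) (simp add: x\<^sub>0_def)
qed (use assms(1) dvd_lin_comb in blast)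

lemma card_lin_comb_fibre:
  assumes u: "\<forall>i<m. \<gamma> ^ t dvd u i" and j: "j < m" "\<not> \<gamma> ^ Suc t dvd u j" and y: "\<gamma> ^ t dvd y"
  shows "card {xs. length xs = m \<and> lin_comb m u xs = y} = q ^ (s * (m - 1) + t)"
proof -
  let ?F = "\<lambda>y. {xs. length xs = m \<and> lin_comb m u xs = y}"
  have image: "lin_comb m u ` {xs. length xs = m} = {y. \<gamma> ^ t dvd y}"
    using u j by (rule lin_comb_image)
  have fibre: "card (?F y) = card (?F 0)" if "\<gamma> ^ t dvd y" for y
  proof -
    have "y \<in> lin_comb m u ` {xs. length xs = m}"
      using that image by simp
    then obtain x\<^sub>0 where "length x\<^sub>0 = m" "y = lin_comb m u x\<^sub>0"
      by blast
    then show ?thesis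
      using card_lin_comb_fibre_translate[of x\<^sub>0 m u 0] by simp
  qed
  have t: "t < s"
    using u j by (intro exact_power_less[of t "u j"]) auto
  obtain m' where m: "m = Suc m'"
    using j by (cases m) auto
  then have "s - t + (s * (m - 1) + t) = s * m"
    using t by simp
  then have "q ^ (s - t) * q ^ (s * (m - 1) + t) = q ^ (s * m)"
    by (metis power_add)
  also have "\<dots> = card {xs :: 'a list. length xs = m}"
    using card_lists_length_eq[of "UNIV :: 'a set" m] by (simp add: card_UNIV_eq power_mult)
  also have "\<dots> = (\<Sum>y\<in>{y. \<gamma> ^ t dvd y}. card (?F y))"
    using card_eq_sum_card_fibres[of "{xs :: 'a list. length xs = m}" "lin_comb m u"]
      finite_lists_length_eq[OF finite_UNIV, of m]
    by (simp add: image)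
  also have "\<dots> = (\<Sum>y\<in>{y. \<gamma> ^ t dvd y}. card (?F 0))"
    by (intro sum.cong refl fibre) simp
  also have "\<dots> = q ^ (s - t) * card (?F 0)"
    using card_multiples_gamma_power[of t] t by simp
  finally have "card (?F 0) = q ^ (s * (m - 1) + t)"
    using length_T by (metis mult_left_cancel not_numeral_le_zero power_not_zero list.size(3))
  with fibre[OF y] show ?thesis
    by simp
qed

lemma card_mult_fibre:
  assumes u: "\<gamma> ^ t dvd u" "\<not> \<gamma> ^ Suc t dvd u" and z: "\<gamma> ^ Suc t dvd z"
  shows "card {a. \<gamma> dvd a \<and> u * a = z} = q ^ t"
proof -
  obtain v where "v dvd 1" and v: "u = \<gamma> ^ t * v"
    using u by (rule exact_power_dvdE)
  then obtain v' where v': "v' * v = 1"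
    by (metis dvdE mult.commute)
  have t: "t < s"
    using u by (rule exact_power_less)
  have "\<gamma> dvd a" if "u * a = z" for a
  proof -
    have "\<gamma> ^ Suc t dvd \<gamma> ^ t * (v * a)"
      using that z v by (simp add: mult.assoc)
    then have "\<gamma> dvd v * a"
      by (rule gamma_dvd_of_power_dvd_mult[OF t])
    then have "\<gamma> dvd v' * (v * a)"
      by (rule dvd_mult)
    with v' show ?thesis
      by (simp flip: mult.assoc)
  qed
  then have "{a. \<gamma> dvd a \<and> u * a = z} = {a. u * a = z}"
    by blast
  moreover have "{xs. length xs = 1 \<and> lin_comb 1 (\<lambda>_. u) xs = z} = (\<lambda>a. [a]) ` {a. u * a = z}"
    by (auto simp: lin_comb_def length_Suc_conv)
  moreover have "card {xs. length xs = 1 \<and> lin_comb 1 (\<lambda>_. u) xs = z} = q ^ t"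
    using card_lin_comb_fibre[of 1 t "\<lambda>_. u" 0 z] u dvd_trans[OF le_imp_power_dvd z]
    by simp
  ultimately show ?thesis
    by (simp add: card_image inj_on_def)
qed

lemma count_lin_comb_Gbeta_Suc_Suc:
  fixes u :: "nat \<Rightarrow> 'a"
  defines "u' \<equiv> \<lambda>i. u (Suc i)"
  shows "count (mset (map (lin_comb (Suc (Suc n)) u) (Gbeta T \<gamma> s (Suc (Suc n))))) y
     = card {xs. length xs = Suc n \<and> u 0 + lin_comb (Suc n) u' xs = y}
     + (\<Sum>a\<in>{a. \<gamma> dvd a}. count (mset (map (lin_comb (Suc n) u') (Gbeta T \<gamma> s (Suc n)))) (y - u 0 * a))"
proof -
  let ?GA = "Galpha T \<gamma> s (Suc n)" and ?GB = "Gbeta T \<gamma> s (Suc n)" and ?D = "lin_comb (Suc n) u'"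
  have "map (lin_comb (Suc (Suc n)) u) (map ((#) 1) ?GA) = map (\<lambda>xs. u 0 + ?D xs) ?GA"
    by (simp add: lin_comb_Cons u'_def)
  then have first: "count (mset (map (lin_comb (Suc (Suc n)) u) (map ((#) 1) ?GA))) y
      = card {xs. length xs = Suc n \<and> u 0 + ?D xs = y}"
    by (simp only: count_mset_map_distinct[OF distinct_Galpha] set_Galpha) simp
  have "map (lin_comb (Suc (Suc n)) u) (concat (map (\<lambda>a. map ((#) a) ?GB) (ideal_list T \<gamma> s)))
      = concat (map (\<lambda>a. map (\<lambda>col. u 0 * a + ?D col) ?GB) (ideal_list T \<gamma> s))"
    by (simp add: map_concat lin_comb_Cons u'_def o_def)
  then have second: "count (mset (map (lin_comb (Suc (Suc n)) u)
        (concat (map (\<lambda>a. map ((#) a) ?GB) (ideal_list T \<gamma> s))))) y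
      = (\<Sum>a\<in>{a. \<gamma> dvd a}. count (mset (map ?D ?GB)) (y - u 0 * a))"
    by (simp only: count_mset_concat_map[OF distinct_ideal_list] set_ideal_list
        count_mset_map_add_left)
  show ?thesis
    using first second by (simp del: mset_map Galpha.simps)
qed

lemma count_lin_comb_Gbeta_step_tail_exact:
  fixes u :: "nat \<Rightarrow> 'a"
  defines "u' \<equiv> \<lambda>i. u (Suc i)"
  assumes u: "\<forall>i<Suc (Suc n). \<gamma> ^ t dvd u i" and j: "j < Suc n" "\<not> \<gamma> ^ Suc t dvd u' j"
    and y: "\<gamma> ^ Suc t dvd y"
    and IH: "\<And>z. \<gamma> ^ Suc t dvd z \<Longrightarrow>
      count (mset (map (lin_comb (Suc n) u') (Gbeta T \<gamma> s (Suc n)))) z = q ^ t * L_beta q s n"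
  shows "count (mset (map (lin_comb (Suc (Suc n)) u) (Gbeta T \<gamma> s (Suc (Suc n))))) y
    = q ^ t * L_beta q s (Suc n)"
proof -
  let ?D = "lin_comb (Suc n) u'"
  have u0: "\<gamma> ^ t dvd u 0" and u': "\<forall>i<Suc n. \<gamma> ^ t dvd u' i"
    using u by (auto simp: u'_def)
  have "\<gamma> ^ t dvd y"
    using y by (rule dvd_trans[OF le_imp_power_dvd, rotated]) simp
  then have "card {xs. length xs = Suc n \<and> ?D xs = y - u 0} = q ^ (s * n + t)"
    using card_lin_comb_fibre[OF u' j] u0 by (simp add: dvd_diff)
  moreover have "{xs. length xs = Suc n \<and> u 0 + ?D xs = y} = {xs. length xs = Suc n \<and> ?D xs = y - u 0}"
    by (auto simp: algebra_simps)
  moreover have "count (mset (map ?D (Gbeta T \<gamma> s (Suc n)))) (y - u 0 * a) = q ^ t * L_beta q s n"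
    if "\<gamma> dvd a" for a
  proof (rule IH)
    have "\<gamma> ^ Suc t dvd u 0 * a"
      using mult_dvd_mono[OF u0 that] by (simp add: mult.commute)
    with y show "\<gamma> ^ Suc t dvd y - u 0 * a"
      by (rule dvd_diff)
  qed
  ultimately have "count (mset (map (lin_comb (Suc (Suc n)) u) (Gbeta T \<gamma> s (Suc (Suc n))))) y
      = q ^ (s * n + t) + q ^ (s - 1) * (q ^ t * L_beta q s n)"
    using count_lin_comb_Gbeta_Suc_Suc[of n u y, folded u'_def] card_multiples_gamma_power[of 1] s_pos
    by simp
  also have "\<dots> = q ^ t * L_beta q s (Suc n)"
    using L_beta_Suc[of q s n] length_T s_pos by (simp add: algebra_simps power_add)
  finally show ?thesis .
qed

lemma count_lin_comb_Gbeta_step_head_exact: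
  fixes u :: "nat \<Rightarrow> 'a"
  defines "u' \<equiv> \<lambda>i. u (Suc i)"
  assumes u0: "\<gamma> ^ t dvd u 0" "\<not> \<gamma> ^ Suc t dvd u 0" and u': "\<forall>i<Suc n. \<gamma> ^ Suc t dvd u' i"
    and y: "\<gamma> ^ Suc t dvd y"
  shows "count (mset (map (lin_comb (Suc (Suc n)) u) (Gbeta T \<gamma> s (Suc (Suc n))))) y
    = q ^ t * L_beta q s (Suc n)"
proof -
  let ?GB = "Gbeta T \<gamma> s (Suc n)" and ?D = "lin_comb (Suc n) u'"
  have D_dvd: "\<gamma> ^ Suc t dvd ?D xs" for xs
    using u' by (rule dvd_lin_comb)
  have "u 0 + ?D xs \<noteq> y" for xs
    using u0(2) D_dvd[of xs] y by (metis add_diff_cancel_right' dvd_diff)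
  then have no_first_block: "{xs. length xs = Suc n \<and> u 0 + ?D xs = y} = {}"
    by blast
  have fibre: "card {a \<in> {a. \<gamma> dvd a}. y - u 0 * a = b} = q ^ t" if "b \<in> set (map ?D ?GB)" for b
  proof -
    have "{a \<in> {a. \<gamma> dvd a}. y - u 0 * a = b} = {a. \<gamma> dvd a \<and> u 0 * a = y - b}"
      by (auto simp: diff_eq_eq eq_diff_eq add.commute)
    moreover have "\<gamma> ^ Suc t dvd y - b"
      using that D_dvd y by (auto intro: dvd_diff)
    ultimately show ?thesis
      using card_mult_fibre[OF u0] by simp
  qed
  have "count (mset (map (lin_comb (Suc (Suc n)) u) (Gbeta T \<gamma> s (Suc (Suc n))))) y
      = (\<Sum>a\<in>{a. \<gamma> dvd a}. count (mset (map ?D ?GB)) (y - u 0 * a))"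
    using count_lin_comb_Gbeta_Suc_Suc[of n u y, folded u'_def] no_first_block by simp
  also have "\<dots> = (\<Sum>b\<leftarrow>map ?D ?GB. card {a \<in> {a. \<gamma> dvd a}. y - u 0 * a = b})"
    by (rule sum_count_mset_eq_sum_list_card[OF finite])
  also have "\<dots> = length ?GB * q ^ t"
    using fibre by (simp add: sum_list_triv cong: map_cong)
  also have "\<dots> = q ^ t * L_beta q s (Suc n)"
    by (simp add: length_Gbeta)
  finally show ?thesis .
qed

lemma count_lin_comb_Gbeta:
  assumes "\<forall>i<Suc n. \<gamma> ^ t dvd u i" and "\<exists>i<Suc n. \<not> \<gamma> ^ Suc t dvd u i"
    and "\<gamma> ^ Suc t dvd y"
  shows "count (mset (map (lin_comb (Suc n) u) (Gbeta T \<gamma> s (Suc n)))) y = q ^ t * L_beta q s n"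
  using assms
proof (induction n arbitrary: u y)
  case 0
  then have "u 0 \<noteq> y"
    by auto
  then show ?case
    by (simp add: lin_comb_def)
next
  case (Suc n)
  show ?case
  proof (cases "\<exists>i<Suc n. \<not> \<gamma> ^ Suc t dvd u (Suc i)")
    case True
    then obtain j where j: "j < Suc n" "\<not> \<gamma> ^ Suc t dvd u (Suc j)"
      by blast
    have IH: "count (mset (map (lin_comb (Suc n) (\<lambda>i. u (Suc i))) (Gbeta T \<gamma> s (Suc n)))) z
        = q ^ t * L_beta q s n" if "\<gamma> ^ Suc t dvd z" for z
      using Suc.IH[of "\<lambda>i. u (Suc i)" z] Suc.prems(1) True that by simp
    show ?thesis
      using Suc.prems j IH by (intro count_lin_comb_Gbeta_step_tail_exact[of n t u j y]) simp_all
  next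
    case False
    then have "\<not> \<gamma> ^ Suc t dvd u 0"
      using Suc.prems(2) by (auto simp: less_Suc_eq_0_disj)
    with False Suc.prems show ?thesis
      by (intro count_lin_comb_Gbeta_step_head_exact) auto
  qed
qed

lemma length_filter_lin_comb_Gbeta_not_dvd:
  assumes "\<forall>i<Suc n. \<gamma> ^ t dvd u i" and "\<exists>i<Suc n. \<not> \<gamma> ^ Suc t dvd u i"
  shows "length (filter (\<lambda>x. \<not> \<gamma> ^ Suc t dvd x) (map (lin_comb (Suc n) u) (Gbeta T \<gamma> s (Suc n))))
    = q ^ (s * n)"
proof -
  let ?c = "map (lin_comb (Suc n) u) (Gbeta T \<gamma> s (Suc n))"
  have t: "t < s"
    using assms exact_power_less by blast
  have "length (filter (\<lambda>x. x \<in> {x. \<gamma> ^ Suc t dvd x}) ?c)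
      = (\<Sum>y\<in>{x. \<gamma> ^ Suc t dvd x}. count (mset ?c) y)"
    by (rule length_filter_mem_eq_sum_count[OF finite])
  also have "\<dots> = q ^ (s - Suc t) * (q ^ t * L_beta q s n)"
    using count_lin_comb_Gbeta[OF assms] card_multiples_gamma_power[of "Suc t"] t by simp
  also have "\<dots> = q ^ (s - 1) * L_beta q s n"
    using t by (simp flip: power_add mult.assoc)
  finally have "length (filter (\<lambda>x. \<gamma> ^ Suc t dvd x) ?c) = q ^ (s - 1) * L_beta q s n"
    by simp
  moreover have "length ?c = q ^ (s * n) + q ^ (s - 1) * L_beta q s n"
    using length_Gbeta[of n] L_beta_Suc[of q s n] length_T s_pos by simp
  ultimately show ?thesis
    using sum_length_filter_compl[of "\<lambda>x. \<gamma> ^ Suc t dvd x" ?c] by simp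
qed


lemma code_beta_exact_powerE:
  assumes "c \<in> code_beta T \<gamma> s (Suc n)" and "\<exists>x\<in>set c. x \<noteq> 0"
  obtains u t where "c = map (lin_comb (Suc n) u) (Gbeta T \<gamma> s (Suc n))"
    and "\<forall>i<Suc n. \<gamma> ^ t dvd u i" and "\<exists>i<Suc n. \<not> \<gamma> ^ Suc t dvd u i"
proof -
  obtain u where c: "c = map (lin_comb (Suc n) u) (Gbeta T \<gamma> s (Suc n))"
    using assms(1) by (auto simp: code_beta_eq)
  have nonzero: "\<exists>x\<in>u ` {..<Suc n}. x \<noteq> 0"
  proof (rule ccontr)
    assume "\<not> (\<exists>x\<in>u ` {..<Suc n}. x \<noteq> 0)"
    then have "\<forall>x\<in>set c. x = 0"
      using c by (auto simp: lin_comb_def)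
    with assms(2) show False
      by blast
  qed
  obtain t where "\<forall>x\<in>u ` {..<Suc n}. \<gamma> ^ t dvd x" "\<exists>x\<in>u ` {..<Suc n}. \<not> \<gamma> ^ Suc t dvd x"
    using exists_exact_power[OF nonzero] by blast
  with c that show ?thesis
    by auto
qed

lemma nu_vec_lin_comb_Gbeta:
  assumes "\<forall>i<Suc n. \<gamma> ^ t dvd u i" and "\<exists>i<Suc n. \<not> \<gamma> ^ Suc t dvd u i"
  shows "nu_vec \<gamma> (map (lin_comb (Suc n) u) (Gbeta T \<gamma> s (Suc n))) = t"
proof -
  let ?c = "map (lin_comb (Suc n) u) (Gbeta T \<gamma> s (Suc n))"
  have "q ^ (s * n) \<noteq> 0"
    using length_T by (intro power_not_zero) auto
  then have "length (filter (\<lambda>x. \<not> \<gamma> ^ Suc t dvd x) ?c) \<noteq> 0"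
    using length_filter_lin_comb_Gbeta_not_dvd[OF assms] by simp
  then obtain x\<^sub>0 where "x\<^sub>0 \<in> set ?c" "\<not> \<gamma> ^ Suc t dvd x\<^sub>0"
    by (metis filter_False list.size(3))
  moreover have "\<forall>x\<in>set ?c. \<gamma> ^ t dvd x"
    using assms(1) dvd_lin_comb by auto
  ultimately show ?thesis
    by (intro nu_vec_eq) auto
qed

end

theorem proposition3p20:
  fixes \<gamma> :: "'a::{comm_ring_1,finite}" and T :: "'a list" and s k :: nat and c :: "'a list"
  assumes chain: "\<forall>I J :: 'a set. is_ideal I \<and> is_ideal J \<longrightarrow> I \<subseteq> J \<or> J \<subseteq> I"
    and maxideal: "{x. \<gamma> dvd x} = {x. \<not> x dvd 1}"
    and s_pos: "1 \<le> s" and nil: "\<gamma> ^ s = 0" and nil_min: "\<gamma> ^ (s - 1) \<noteq> 0"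
    and T_len: "2 \<le> length T" and T0: "T ! 0 = 0" and T1: "T ! 1 = 1"
    and reps: "\<forall>x. \<exists>!i. i < length T \<and> \<gamma> dvd (x - T ! i)"
    and k: "2 \<le> k"
    and c_in: "c \<in> code_beta T \<gamma> s k"
    and c_nz: "\<exists>x\<in>set c. x \<noteq> 0"
  shows "(\<forall>x. \<gamma> ^ (nu_vec \<gamma> c + 1) dvd x \<longrightarrow>
              count (mset c) x = length T ^ nu_vec \<gamma> c * L_beta (length T) s (k - 1))
         \<and> (\<forall>x\<in>set c. \<gamma> ^ nu_vec \<gamma> c dvd x)
         \<and> length (filter (\<lambda>x. \<not> \<gamma> ^ (nu_vec \<gamma> c + 1) dvd x) c) = length T ^ (s * (k - 1))"
proof -
  interpret finite_chain_ring \<gamma> T s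
    using maxideal s_pos nil nil_min T_len reps by unfold_locales
  obtain n where n: "k = Suc n"
    using k by (cases k) auto
  obtain u t where c: "c = map (lin_comb (Suc n) u) (Gbeta T \<gamma> s (Suc n))"
    and u: "\<forall>i<Suc n. \<gamma> ^ t dvd u i" "\<exists>i<Suc n. \<not> \<gamma> ^ Suc t dvd u i"
    using c_in c_nz unfolding n by (rule code_beta_exact_powerE)
  have "nu_vec \<gamma> c = t"
    unfolding c using u by (rule nu_vec_lin_comb_Gbeta)
  moreover have "\<forall>x\<in>set c. \<gamma> ^ t dvd x"
    using u(1) c dvd_lin_comb by auto
  ultimately show ?thesis
    using count_lin_comb_Gbeta[OF u] length_filter_lin_comb_Gbeta_not_dvd[OF u] c n by simp
qed

end
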